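(* Let $n\ge 2$ and consider \textsc{LOTZ}. Let $\mathrm{score}(x,P)$ be any diversity measure that is diversity-favouring on $\{0,1\}^n\setminus\{0^n,1^n\}$ with respect to \textsc{LOTZ} (for example HVC with a reference point $(r_1,r_2)$, $r_1\le-1$, $r_2\le-1$, or CDC). Consider the modified GSEMO with diversity-based parent selection using this measure. Then the expected time to find the whole Pareto front of \textsc{LOTZ} is $O(n^2)$ for the exponential and power law ranking schemes and for tournament selection with tournament size $\mu$, and $O(n^2\log n)$ for the harmonic ranking scheme.
   Context: Search space $\{0,1\}^n$; objectives maximised. $\textsc{LOTZ}(x)=(\mathrm{LO}(x),\mathrm{TZ}(x))$, where $\mathrm{LO}(x)$ is the number of leading ones and $\mathrm{TZ}(x)$ the number of trailing zeros of $x$. Dominance: $y$ dominates $x$ if $f_i(y)\ge f_i(x)$ for all $i$ and strictly for some $i$; weakly dominates if $f_i(y)\ge f_i(x)$ for all $i$. Pareto set $X^*=\{1^i0^{n-i}:0\le i\le n\}$, Pareto front $F^*=f(X^* )$. Modified GSEMO with diversity-based parent selection: let $\mathrm{L}(x)=\mathrm{LO}(x)+\mathrm{TZ}(x)$. Choose $s$ uniformly at random, $P=\{s\}$. In each iteration: let $P'\subseteq P$ be the set of all points of $P$ with maximum $\mathrm{L}$-value; compute $\mathrm{score}(x,P')$ for all $x\in P'$ (with respect to the population $P'$); choose a parent $s\in P'$ according to the parent selection mechanism (applied to $P'$, with $\mu=|P'|$); create $s'$ by flipping each bit of $s$ independently with probability $1/n$; if $s'$ is not dominated by any member of $P$, add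 it to $P$ and remove all members of $P$ weakly dominated by $s'$. Time = number of iterations until $f(P)=F^*$. Good: w.r.t. population $P$, $x\in P\cap X^*$ is good if some Hamming neighbour $y$ of $x$ satisfies $y\in X^*$ and $f(y)\notin f(P)$; otherwise bad. Diversity-favouring on $S$: for every population $P$ and all $x,y\in P\cap X^*\cap S$, $x$ bad and $y$ good imply $\mathrm{score}(x,P)<\mathrm{score}(y,P)$. HVC with reference point $(r_1,r_2)$: sort population by increasing $f_1$ as $x_1,\dots,x_\mu$, set $f_1(x_0)=r_1$, $f_2(x_{\mu+1})=r_2$, $\mathrm{HVC}(x_i,P)=(f_1(x_i)-f_1(x_{i-1}))(f_2(x_i)-f_2(x_{i+1}))$. CDC: each point starts at 0; for each objective $m$, sort ascending by $f_m$, boundary points get $\infty$, intermediate $P[i]$ gets $+(f_m(P[i+1])-f_m(P[i-1]))/(f_m^{\max}-f_m^{\min})$ ($f_m^{\max},f_m^{\min}$ max and min values of objective $m$). Parent selection: sort by non-increasing score; $i$-th ranked chosen with probability $2^{-i}/\sum_{j=1}^\mu2^{-j}$ (exponential), $i^{-2}/\sum_{j=1}^\mu j^{-2}$ (power law), $i^{-1}/\sum_{j=1}^\mu j^{-1}$ (harmonic); tournament of size $\mu$: draw $\mu$ individuals uniformly with replacement, select the one with highest score. *)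

theory Defs
  imports "HOL-Probability.Probability"
begin

(* Bit strings of length n are represented as bool lists; True = 1, False = 0. *)

definition LO :: "bool list \<Rightarrow> nat" where
  "LO x = length (takeWhile (\<lambda>b. b) x)"

definition TZ :: "bool list \<Rightarrow> nat" where
  "TZ x = length (takeWhile (\<lambda>b. \<not> b) (rev x))"

definition fobj :: "bool list \<Rightarrow> nat \<times> nat" where
  "fobj x = (LO x, TZ x)"

definition weakly_dom :: "bool list \<Rightarrow> bool list \<Rightarrow> bool" where
  "weakly_dom y x \<longleftrightarrow> LO y \<ge> LO x \<and> TZ y \<ge> TZ x"

definition dominates :: "bool list \<Rightarrow> bool list \<Rightarrow> bool" where
  "dominates y x \<longleftrightarrow> weakly_dom y x \<and> (LO y > LO x \<or> TZ y > TZ x)"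

definition pareto_set :: "nat \<Rightarrow> bool list set" where
  "pareto_set n = {replicate i True @ replicate (n - i) False | i. i \<le> n}"

definition pareto_front :: "nat \<Rightarrow> (nat \<times> nat) set" where
  "pareto_front n = fobj ` pareto_set n"

definition hamming_nb :: "bool list \<Rightarrow> bool list \<Rightarrow> bool" where
  "hamming_nb x y \<longleftrightarrow> length x = length y \<and> card {i. i < length x \<and> x ! i \<noteq> y ! i} = 1"

definition good :: "nat \<Rightarrow> bool list set \<Rightarrow> bool list \<Rightarrow> bool" where
  "good n P x \<longleftrightarrow> x \<in> P \<inter> pareto_set n \<and>
     (\<exists>y. hamming_nb x y \<and> y \<in> pareto_set n \<and> fobj y \<notin> fobj ` P)"

definition bad :: "nat \<Rightarrow> bool list set \<Rightarrow> bool list \<Rightarrow> bool" where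
  "bad n P x \<longleftrightarrow> x \<in> P \<inter> pareto_set n \<and> \<not> good n P x"

definition is_population :: "nat \<Rightarrow> bool list set \<Rightarrow> bool" where
  "is_population n P \<longleftrightarrow> finite P \<and> P \<noteq> {} \<and> P \<subseteq> {x. length x = n} \<and>
     (\<forall>x\<in>P. \<forall>y\<in>P. x \<noteq> y \<longrightarrow> \<not> weakly_dom x y)"

definition diversity_favouring ::
  "nat \<Rightarrow> (bool list \<Rightarrow> bool list set \<Rightarrow> real) \<Rightarrow> bool list set \<Rightarrow> bool" where
  "diversity_favouring n score S \<longleftrightarrow>
     (\<forall>P. is_population n P \<longrightarrow>
        (\<forall>x \<in> P \<inter> pareto_set n \<inter> S. \<forall>y \<in> P \<inter> pareto_set n \<inter> S.
           bad n P x \<and> good n P y \<longrightarrow> score x P < score y P))"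

definition inner_strings :: "nat \<Rightarrow> bool list set" where
  "inner_strings n = {x. length x = n} - {replicate n False, replicate n True}"

(* A ranking rk P : P -> {1..|P|} obtained by sorting P by non-increasing score,
   ties broken arbitrarily. *)
definition valid_ranking ::
  "nat \<Rightarrow> (bool list \<Rightarrow> bool list set \<Rightarrow> real) \<Rightarrow> (bool list set \<Rightarrow> bool list \<Rightarrow> nat) \<Rightarrow> bool" where
  "valid_ranking n score rk \<longleftrightarrow>
     (\<forall>P. is_population n P \<longrightarrow>
        bij_betw (rk P) P {1..card P} \<and>
        (\<forall>x\<in>P. \<forall>y\<in>P. score x P > score y P \<longrightarrow> rk P x < rk P y))"

datatype scheme = Exponential | PowerLaw | Harmonic | Tournament

fun rank_weight :: "scheme \<Rightarrow> nat \<Rightarrow> real" where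
  "rank_weight Exponential i = (1/2) ^ i"
| "rank_weight PowerLaw i = 1 / (real i) ^ 2"
| "rank_weight Harmonic i = 1 / real i"
| "rank_weight Tournament i = 0"

definition rank_select :: "scheme \<Rightarrow> bool list set \<Rightarrow> (bool list \<Rightarrow> nat) \<Rightarrow> bool list pmf" where
  "rank_select sch P r = embed_pmf (\<lambda>x. if x \<in> P
       then rank_weight sch (r x) / (\<Sum>j = 1..card P. rank_weight sch j) else 0)"

fun draws :: "'a set \<Rightarrow> nat \<Rightarrow> 'a list pmf" where
  "draws P 0 = return_pmf []"
| "draws P (Suc k) = bind_pmf (pmf_of_set P) (\<lambda>x. map_pmf (\<lambda>xs. x # xs) (draws P k))"

(* tournament of size |P|: the drawn individual with highest score wins,
   i.e. the one of smallest rank (ties in score broken by the ranking) *)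
definition tournament_select :: "bool list set \<Rightarrow> (bool list \<Rightarrow> nat) \<Rightarrow> bool list pmf" where
  "tournament_select P r = map_pmf (arg_min_list r) (draws P (card P))"

definition parent_select :: "scheme \<Rightarrow> bool list set \<Rightarrow> (bool list \<Rightarrow> nat) \<Rightarrow> bool list pmf" where
  "parent_select sch P r =
     (if sch = Tournament then tournament_select P r else rank_select sch P r)"

fun mutate :: "nat \<Rightarrow> bool list \<Rightarrow> bool list pmf" where
  "mutate n [] = return_pmf []"
| "mutate n (b # bs) = bind_pmf (bernoulli_pmf (1 / real n))
      (\<lambda>c. map_pmf (\<lambda>r. (b \<noteq> c) # r) (mutate n bs))"

definition Lval :: "bool list \<Rightarrow> nat" where
  "Lval x = LO x + TZ x"

definition front_of :: "bool list set \<Rightarrow> bool list set" where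
  "front_of P = {x \<in> P. Lval x = Max (Lval ` P)}"

definition update :: "bool list set \<Rightarrow> bool list \<Rightarrow> bool list set" where
  "update P s' = (if \<exists>y\<in>P. dominates y s' then P
                  else insert s' {y \<in> P. \<not> weakly_dom s' y})"

definition gsemo_step ::
  "nat \<Rightarrow> scheme \<Rightarrow> (bool list set \<Rightarrow> bool list \<Rightarrow> nat) \<Rightarrow> bool list set \<Rightarrow> bool list set pmf" where
  "gsemo_step n sch rk P =
     (let P' = front_of P in
      bind_pmf (parent_select sch P' (rk P')) (\<lambda>s. map_pmf (update P) (mutate n s)))"

definition finished :: "nat \<Rightarrow> bool list set \<Rightarrow> bool" where
  "finished n P \<longleftrightarrow> fobj ` P = pareto_front n"

definition init_pop :: "nat \<Rightarrow> bool list set pmf" where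
  "init_pop n = map_pmf (\<lambda>s. {s}) (pmf_of_set {x. length x = n})"

fun state_dist ::
  "nat \<Rightarrow> scheme \<Rightarrow> (bool list set \<Rightarrow> bool list \<Rightarrow> nat) \<Rightarrow> nat \<Rightarrow> bool list set pmf" where
  "state_dist n sch rk 0 = init_pop n"
| "state_dist n sch rk (Suc t) = bind_pmf (state_dist n sch rk t)
      (\<lambda>P. if finished n P then return_pmf P else gsemo_step n sch rk P)"

(* E[T] = sum_{t>=0} Pr[T > t] *)
definition expected_time ::
  "nat \<Rightarrow> scheme \<Rightarrow> (bool list set \<Rightarrow> bool list \<Rightarrow> nat) \<Rightarrow> ennreal" where
  "expected_time n sch rk =
     (\<Sum>t. ennreal (measure_pmf.prob (state_dist n sch rk t) {P. \<not> finished n P}))"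

end

theory Submission
  imports Defs
begin

text \<open>The potential \<open>Max (Lval ` P) + card (P \<inter> pareto_set n)\<close> never decreases,
  stays below \<open>2 n + 1\<close> until the whole front is found, and increases in every iteration
  with probability at least \<open>c / (e n)\<close>, where \<open>c\<close> bounds the probability of selecting a
  fixed parent of rank at most 3 (a constant for exponential, power-law and tournament
  selection, of order \<open>1 / log n\<close> for harmonic selection). Additive drift then gives
  \<open>E[T] \<le> (2 n + 1) e n / c\<close>.

  Before a Pareto point is found, every parent has maximal \<open>Lval\<close>, and setting its first
  0-bit increases \<open>Lval\<close>. Afterwards the parents are the Pareto points of \<open>P\<close>. If one
  of the inner ones is good, the diversity-favouring score ranks the best good inner point
  behind at most \<open>0\<^sup>n\<close> and \<open>1\<^sup>n\<close>. Otherwise every present interior Pareto point has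
  both neighbours present; as the front is incomplete, no interior Pareto point is present,
  and \<open>0\<^sup>n\<close> or \<open>1\<^sup>n\<close>, of rank at most 2, has a missing neighbour.\<close>

section \<open>Leading ones, trailing zeros and the Pareto set\<close>

lemma LO_ge_iff: "k \<le> LO x \<longleftrightarrow> k \<le> length x \<and> (\<forall>j<k. x ! j)"
proof (induction x arbitrary: k)
  case Nil
  then show ?case by (auto simp: LO_def)
next
  case (Cons b x)
  show ?case
  proof (cases k)
    case 0
    then show ?thesis by simp
  next
    case (Suc k')
    have "Suc k' \<le> LO (b # x) \<longleftrightarrow> b \<and> k' \<le> LO x"
      by (simp add: LO_def)
    also have "\<dots> \<longleftrightarrow> Suc k' \<le> length (b # x) \<and> (\<forall>j<Suc k'. (b # x) ! j)"
      unfolding Cons.IH by (auto simp: All_less_Suc2)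
    finally show ?thesis
      using Suc by simp
  qed
qed

lemma TZ_eq_LO: "TZ x = LO (map Not (rev x))"
  unfolding TZ_def LO_def by (simp add: takeWhile_map comp_def)

lemma TZ_ge_iff: "k \<le> TZ x \<longleftrightarrow> k \<le> length x \<and> (\<forall>j<k. \<not> x ! (length x - Suc j))"
  unfolding TZ_eq_LO LO_ge_iff by (auto simp: rev_nth)

lemma LO_le_length: "LO x \<le> length x"
  using LO_ge_iff[of "LO x" x] by simp

lemma TZ_le_length: "TZ x \<le> length x"
  using TZ_ge_iff[of "TZ x" x] by simp

lemma nth_less_LO: "j < LO x \<Longrightarrow> x ! j"
  using LO_ge_iff[of "LO x" x] by simp

lemma not_nth_LO:
  assumes "LO x < length x"
  shows "\<not> x ! LO x"
proof
  assume "x ! LO x"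
  then have "\<forall>j<Suc (LO x). x ! j"
    using nth_less_LO less_Suc_eq by auto
  then have "Suc (LO x) \<le> LO x"
    using assms LO_ge_iff[of "Suc (LO x)" x] by simp
  then show False by simp
qed

lemma LO_plus_TZ_le: "LO x + TZ x \<le> length x"
proof (rule ccontr)
  assume "\<not> ?thesis"
  then have "0 < TZ x" and overlap: "length x - TZ x < LO x"
    using LO_le_length[of x] TZ_le_length[of x] by linarith+
  have "\<forall>j<TZ x. \<not> x ! (length x - Suc j)"
    using TZ_ge_iff[of "TZ x" x] by simp
  then have "\<not> x ! (length x - Suc (TZ x - 1))"
    using \<open>0 < TZ x\<close> diff_less zero_less_one by blast
  then show False
    using nth_less_LO[OF overlap] \<open>0 < TZ x\<close> by simp
qed

lemma Lval_le_length: "Lval x \<le> length x"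
  unfolding Lval_def by (rule LO_plus_TZ_le)

definition pareto_point :: "nat \<Rightarrow> nat \<Rightarrow> bool list" where
  "pareto_point n i = replicate i True @ replicate (n - i) False"

lemma pareto_set_eq: "pareto_set n = pareto_point n ` {..n}"
  unfolding pareto_set_def pareto_point_def by auto

lemma length_pareto_point [simp]: "i \<le> n \<Longrightarrow> length (pareto_point n i) = n"
  unfolding pareto_point_def by simp

lemma nth_pareto_point: "i \<le> n \<Longrightarrow> j < n \<Longrightarrow> pareto_point n i ! j = (j < i)"
  unfolding pareto_point_def by (auto simp: nth_append)

lemma LO_pareto_point [simp]: "LO (pareto_point n i) = i"
  unfolding pareto_point_def LO_def by (cases "n - i") (auto simp: takeWhile_append)

lemma TZ_pareto_point [simp]: "i \<le> n \<Longrightarrow> TZ (pareto_point n i) = n - i"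
proof -
  assume "i \<le> n"
  then have "map Not (rev (pareto_point n i)) = pareto_point n (n - i)"
    by (simp add: pareto_point_def)
  then show ?thesis
    by (simp only: TZ_eq_LO LO_pareto_point)
qed

lemma eq_pareto_point_LO:
  assumes len: "length x = n" and full: "n \<le> LO x + TZ x"
  shows "x = pareto_point n (LO x)"
proof (rule nth_equalityI)
  have LO_le: "LO x \<le> n"
    using LO_le_length len by metis
  then show "length x = length (pareto_point n (LO x))"
    using len by simp
  fix j assume "j < length x"
  then have j: "j < n" using len by simp
  show "x ! j = pareto_point n (LO x) ! j"
  proof (cases "j < LO x")
    case True
    then show ?thesis using nth_less_LO nth_pareto_point[OF LO_le j] by simp
  next
    case False
    then have "n - Suc j < TZ x" using full j by linarith
    then have "\<not> x ! (n - Suc (n - Suc j))"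
      using TZ_ge_iff[of "TZ x" x] len by simp
    then show ?thesis using False j nth_pareto_point[OF LO_le j] by (simp add: Suc_diff_Suc)
  qed
qed

lemma mem_pareto_set_iff: "x \<in> pareto_set n \<longleftrightarrow> length x = n \<and> Lval x = n"
proof
  assume "x \<in> pareto_set n"
  then show "length x = n \<and> Lval x = n"
    by (auto simp: pareto_set_eq Lval_def)
next
  assume "length x = n \<and> Lval x = n"
  then have "x = pareto_point n (LO x)" and "LO x \<le> n"
    using eq_pareto_point_LO[of x n] LO_le_length[of x] by (auto simp: Lval_def)
  then show "x \<in> pareto_set n"
    unfolding pareto_set_eq by blast
qed

lemma pareto_point_mem_pareto_set: "i \<le> n \<Longrightarrow> pareto_point n i \<in> pareto_set n"
  by (simp add: pareto_set_eq)

lemma finite_pareto_set: "finite (pareto_set n)"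
  by (simp add: pareto_set_eq)

lemma card_pareto_set: "card (pareto_set n) = Suc n"
proof -
  have "inj_on (pareto_point n) {..n}"
    by (metis LO_pareto_point inj_onI)
  then show ?thesis
    by (simp add: pareto_set_eq card_image)
qed

lemma weakly_dom_pareto_eq:
  assumes "length x = n" "y \<in> pareto_set n" "weakly_dom x y"
  shows "x = y"
proof -
  have "Lval y = n" "length y = n"
    using assms(2) by (auto simp: mem_pareto_set_iff)
  with assms have "LO x = LO y" "n \<le> LO x + TZ x"
    using LO_plus_TZ_le[of x] by (auto simp: weakly_dom_def Lval_def)
  then show ?thesis
    using eq_pareto_point_LO[OF assms(1)] eq_pareto_point_LO[of y n] \<open>Lval y = n\<close> \<open>length y = n\<close>
    by (simp add: Lval_def)
qed

lemma fobj_eq_pareto_eq: "length x = n \<Longrightarrow> y \<in> pareto_set n \<Longrightarrow> fobj x = fobj y \<Longrightarrow> x = y"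
  by (rule weakly_dom_pareto_eq) (auto simp: fobj_def weakly_dom_def)

section \<open>Hamming distance and standard bit mutation\<close>

fun hamming_dist :: "bool list \<Rightarrow> bool list \<Rightarrow> nat" where
  "hamming_dist (a # x) (b # y) = (if a = b then 0 else 1) + hamming_dist x y"
| "hamming_dist _ _ = 0"

lemma hamming_dist_self [simp]: "hamming_dist x x = 0"
  by (induction x) auto

lemma hamming_dist_le_length: "hamming_dist x y \<le> length x"
  by (induction x y rule: hamming_dist.induct) auto

lemma card_differences_eq_hamming_dist:
  "length x = length y \<Longrightarrow> card {i. i < length x \<and> x ! i \<noteq> y ! i} = hamming_dist x y"
proof (induction x y rule: hamming_dist.induct)
  case (1 a x b y)
  have "{i. i < length (a # x) \<and> (a # x) ! i \<noteq> (b # y) ! i} =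
      (if a = b then {} else {0}) \<union> Suc ` {i. i < length x \<and> x ! i \<noteq> y ! i}"
    (is "?lhs = ?rhs")
  proof (rule set_eqI)
    fix i show "i \<in> ?lhs \<longleftrightarrow> i \<in> ?rhs"
      by (cases i) (auto simp: image_iff)
  qed
  then show ?case
    using 1 by (simp add: card_image)
qed auto

lemma hamming_nb_iff: "hamming_nb x y \<longleftrightarrow> length x = length y \<and> hamming_dist x y = 1"
  unfolding hamming_nb_def by (metis card_differences_eq_hamming_dist)

lemma hamming_dist_commute: "hamming_dist x y = hamming_dist y x"
  by (induction x y rule: hamming_dist.induct) auto

lemma hamming_nb_commute: "hamming_nb x y \<longleftrightarrow> hamming_nb y x"
  unfolding hamming_nb_iff by (auto simp: hamming_dist_commute)

lemma hamming_dist_update: "k < length x \<Longrightarrow> hamming_dist x (x[k := \<not> x ! k]) = 1"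
proof (induction x arbitrary: k)
  case (Cons a x)
  then show ?case by (cases k) auto
qed simp

lemma set_first_zero_improves:
  assumes len: "length x = n" and "x \<notin> pareto_set n"
  shows "hamming_nb x (x[LO x := True]) \<and> Lval x < Lval (x[LO x := True])"
proof -
  let ?y = "x[LO x := True]"
  have gap: "LO x + TZ x < n"
    using assms LO_plus_TZ_le[of x] by (auto simp: mem_pareto_set_iff Lval_def)
  have "Suc (LO x) \<le> LO ?y"
    using gap len by (auto simp: LO_ge_iff nth_list_update less_Suc_eq nth_less_LO)
  moreover have "TZ x \<le> TZ ?y"
    using gap len TZ_ge_iff[of "TZ x" x] by (auto simp: TZ_ge_iff nth_list_update)
  moreover have "\<not> x ! LO x"
    using gap len not_nth_LO[of x] by simp
  then have "hamming_dist x ?y = 1"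
    using hamming_dist_update[of "LO x" x] gap len by simp
  ultimately show ?thesis
    by (simp add: Lval_def hamming_nb_iff)
qed

lemma hamming_nb_pareto_point_Suc:
  assumes "i < n"
  shows "hamming_nb (pareto_point n i) (pareto_point n (Suc i))"
proof -
  have "{j. j < length (pareto_point n i) \<and> pareto_point n i ! j \<noteq> pareto_point n (Suc i) ! j} = {i}"
    using assms by (auto simp: nth_pareto_point)
  then show ?thesis
    using assms unfolding hamming_nb_def by simp
qed

lemma length_mutate: "t \<in> set_pmf (mutate n s) \<Longrightarrow> length t = length s"
  by (induction n s arbitrary: t rule: mutate.induct) auto

lemma pmf_map_Cons: "pmf (map_pmf ((#) a) M) (b # xs) = (if a = b then pmf M xs else 0)"
proof -
  have "(#) a -` {b # xs} = (if a = b then {xs} else {})"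
    by auto
  then show ?thesis
    by (simp add: pmf_map measure_pmf_single)
qed

lemma pmf_mutate:
  assumes "0 < n"
  shows "length t = length s \<Longrightarrow> pmf (mutate n s) t =
    (1 / real n) ^ hamming_dist s t * (1 - 1 / real n) ^ (length s - hamming_dist s t)"
proof (induction s arbitrary: t)
  case (Cons b s)
  then obtain c t' where t: "t = c # t'" and len: "length t' = length s"
    by (cases t) auto
  let ?q = "1 / real n"
  have "pmf (mutate n (b # s)) t = (if b \<noteq> c then ?q else 1 - ?q) * pmf (mutate n s) t'"
    using assms t by (simp add: pmf_bind pmf_map_Cons)
  moreover have "hamming_dist s t' \<le> length s"
    by (rule hamming_dist_le_length)
  ultimately show ?case
    using Cons.IH[OF len] t by (simp add: Suc_diff_le)
qed simp

lemma exp_minus_one_le_power: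
  assumes "2 \<le> n"
  shows "exp (-1) \<le> (1 - 1 / real n) ^ (n - 1)"
proof -
  define m where "m = n - 1"
  have m: "0 < m" "real n = real m + 1"
    using assms by (auto simp: m_def)
  have "(1 + 1 / real m) ^ m \<le> exp 1"
    using exp_ge_one_plus_x_over_n_power_n[of m 1] m by simp
  then have "exp (-1) \<le> inverse ((1 + 1 / real m) ^ m)"
    unfolding exp_minus by (rule le_imp_inverse_le) (simp add: add_pos_nonneg)
  also have "\<dots> = (1 - 1 / real n) ^ m"
    using m by (simp add: power_inverse field_simps)
  finally show ?thesis
    by (simp add: m_def)
qed

lemma pmf_mutate_hamming_nb:
  assumes n: "2 \<le> n" and s: "length s = n" and st: "hamming_nb s t"
  shows "exp (-1) / real n \<le> pmf (mutate n s) t"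
proof -
  have "pmf (mutate n s) t = 1 / real n * (1 - 1 / real n) ^ (n - 1)"
    using pmf_mutate[of n t s] n s st by (simp add: hamming_nb_iff)
  then show ?thesis
    using exp_minus_one_le_power[OF n] n by (simp add: divide_right_mono)
qed

section \<open>Parent selection\<close>

lemma card_preimage_bij_betw:
  assumes "bij_betw f A B" "C \<subseteq> B"
  shows "card {x\<in>A. f x \<in> C} = card C"
proof -
  have "bij_betw f {x\<in>A. f x \<in> C} C"
    using assms unfolding bij_betw_def by (auto intro: inj_on_subset)
  then show ?thesis
    by (rule bij_betw_same_card)
qed

lemma rank_le_Suc_card:
  assumes r: "bij_betw r A {1..card A}" and y: "y \<in> A"
    and better: "{x\<in>A. r x < r y} \<subseteq> B" and B: "finite B"
  shows "r y \<le> Suc (card B)"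
proof -
  have "r y \<le> card A"
    using r y unfolding bij_betw_def by auto
  then have "card {x\<in>A. r x \<in> {1..<r y}} = r y - 1"
    using card_preimage_bij_betw[OF r, of "{1..<r y}"] by force
  moreover have "{x\<in>A. r x \<in> {1..<r y}} \<subseteq> B"
    using better by auto
  ultimately have "r y - 1 \<le> card B"
    using card_mono[OF B] by metis
  then show ?thesis
    by simp
qed

lemma rank_weight_nonneg: "0 \<le> rank_weight sch i"
  by (cases sch) auto

lemma sum_rank_weight_pos:
  assumes "sch \<noteq> Tournament" "0 < m"
  shows "0 < (\<Sum>j = 1..m. rank_weight sch j)"
proof -
  have "0 < rank_weight sch 1"
    using assms(1) by (cases sch) auto
  also have "\<dots> \<le> (\<Sum>j = 1..m. rank_weight sch j)"
    using assms(2) by (intro member_le_sum) (auto simp: rank_weight_nonneg)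
  finally show ?thesis .
qed

lemma pmf_rank_select:
  assumes sch: "sch \<noteq> Tournament" and A: "finite A" "A \<noteq> {}"
    and r: "bij_betw r A {1..card A}"
  shows "pmf (rank_select sch A r) x =
     (if x \<in> A then rank_weight sch (r x) / (\<Sum>j = 1..card A. rank_weight sch j) else 0)"
proof -
  let ?S = "\<Sum>j = 1..card A. rank_weight sch j"
  let ?f = "\<lambda>x. if x \<in> A then rank_weight sch (r x) / ?S else 0"
  have S: "0 < ?S"
    using sum_rank_weight_pos[OF sch] A by (simp add: card_gt_0_iff)
  have nonneg: "0 \<le> ?f x" for x
    using S rank_weight_nonneg by simp
  have "(\<integral>\<^sup>+x. ennreal (?f x) \<partial>count_space UNIV) = (\<Sum>x\<in>A. ennreal (?f x))"
    using A by (intro nn_integral_count_space') auto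
  also have "\<dots> = ennreal (\<Sum>x\<in>A. ?f x)"
    using nonneg by (rule sum_ennreal)
  also have "(\<Sum>x\<in>A. ?f x) = (\<Sum>x\<in>A. rank_weight sch (r x)) / ?S"
    by (simp add: sum_divide_distrib)
  also have "(\<Sum>x\<in>A. rank_weight sch (r x)) = ?S"
    using sum.reindex_bij_betw[OF r] by simp
  finally have "(\<integral>\<^sup>+x. ennreal (?f x) \<partial>count_space UNIV) = 1"
    using S by simp
  then show ?thesis
    unfolding rank_select_def using pmf_embed_pmf[of ?f] nonneg by simp
qed

lemma set_pmf_rank_select:
  assumes "sch \<noteq> Tournament" "finite A" "A \<noteq> {}" "bij_betw r A {1..card A}"
  shows "set_pmf (rank_select sch A r) \<subseteq> A"
  using pmf_rank_select[OF assms] by (auto simp: set_pmf_eq)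

lemma sum_power_half_le: "(\<Sum>j = 1..m. (1/2::real) ^ j) \<le> 1"
proof -
  have "(\<Sum>j = 1..m. (1/2::real) ^ j) = 1 - (1/2) ^ m"
    by (induction m) (auto simp: field_simps)
  then show ?thesis by simp
qed

lemma sum_inverse_square_le: "0 < m \<Longrightarrow> (\<Sum>j = 1..m. 1 / real j ^ 2) \<le> 2 - 1 / real m"
proof (induction m rule: nat_induct_non_zero)
  case (Suc m)
  have "1 / real (Suc m) ^ 2 \<le> 1 / (real m * real (Suc m))"
    using Suc.hyps by (intro divide_left_mono) (auto simp: power2_eq_square)
  also have "\<dots> = 1 / real m - 1 / real (Suc m)"
    using Suc.hyps by (simp add: field_simps)
  finally show ?case
    using Suc.IH by simp
qed simp

lemma sum_inverse_le_ln: "0 < m \<Longrightarrow> (\<Sum>j = 1..m. 1 / real j) \<le> 1 + ln (real m)"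
  using euler_mascheroni_sequence_decreasing[of 1 m]
  by (simp add: harm_def divide_inverse)

text \<open>A lower bound on the probability that a fixed individual of rank at most 3 in a
  population of at most \<open>n + 1\<close> individuals is selected.\<close>

definition top3_selection_bound :: "scheme \<Rightarrow> nat \<Rightarrow> real" where
  "top3_selection_bound sch n = (case sch of
       Exponential \<Rightarrow> 1/8
     | PowerLaw \<Rightarrow> 1/18
     | Harmonic \<Rightarrow> 1 / (3 * (1 + ln (real n + 1)))
     | Tournament \<Rightarrow> 1/512)"

lemma top3_selection_bound_pos: "0 < top3_selection_bound sch n"
  by (cases sch) (auto simp: top3_selection_bound_def add_pos_nonneg)

lemma top3_selection_bound_le_1: "top3_selection_bound sch n \<le> 1"
  using ln_ge_zero[of "real n + 1"]
  by (cases sch) (auto simp: top3_selection_bound_def divide_le_eq_1)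

lemma rank_select_top3_ge:
  assumes sch: "sch \<noteq> Tournament" and A: "finite A" "A \<noteq> {}" "card A \<le> Suc n"
    and r: "bij_betw r A {1..card A}" and y: "y \<in> A" "r y \<le> 3"
  shows "top3_selection_bound sch n \<le> pmf (rank_select sch A r) y"
proof -
  let ?S = "\<Sum>j = 1..card A. rank_weight sch j"
  have m: "0 < card A"
    using A by (simp add: card_gt_0_iff)
  have S: "0 < ?S"
    using sum_rank_weight_pos[OF sch m] .
  have ry: "1 \<le> r y"
    using r y unfolding bij_betw_def by auto
  have pmf_y: "pmf (rank_select sch A r) y = rank_weight sch (r y) / ?S"
    using pmf_rank_select[OF sch A(1,2) r] y by simp
  show ?thesis
  proof (cases sch)
    case Exponential
    then have "top3_selection_bound sch n = (1/2) ^ 3 / 1"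
      by (simp add: top3_selection_bound_def eval_nat_numeral)
    also have "\<dots> \<le> rank_weight sch (r y) / ?S"
      using y Exponential sum_power_half_le S by (intro frac_le) (auto intro: power_decreasing)
    finally show ?thesis
      using pmf_y by simp
  next
    case PowerLaw
    then have "top3_selection_bound sch n = (1 / 3 ^ 2) / 2"
      by (simp add: top3_selection_bound_def)
    also have "\<dots> \<le> rank_weight sch (r y) / ?S"
    proof (intro frac_le)
      have "real (r y) ^ 2 \<le> 3 ^ 2"
        using y by (intro power_mono) auto
      then show "1 / 3 ^ 2 \<le> rank_weight sch (r y)"
        using ry PowerLaw by (simp add: divide_left_mono)
      show "?S \<le> 2"
        using PowerLaw order_trans[OF sum_inverse_square_le[OF m], of 2] by simp
    qed (use S rank_weight_nonneg in auto)
    finally show ?thesis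
      using pmf_y by simp
  next
    case Harmonic
    then have "top3_selection_bound sch n = (1 / 3) / (1 + ln (real n + 1))"
      by (simp add: top3_selection_bound_def)
    also have "\<dots> \<le> rank_weight sch (r y) / ?S"
    proof (intro frac_le)
      show "1 / 3 \<le> rank_weight sch (r y)"
        using y ry Harmonic by (simp add: divide_left_mono)
      have "ln (real (card A)) \<le> ln (real n + 1)"
        using A(3) m by simp
      then show "?S \<le> 1 + ln (real n + 1)"
        using Harmonic sum_inverse_le_ln[OF m] by simp
    qed (use S rank_weight_nonneg in auto)
    finally show ?thesis
      using pmf_y by simp
  qed (use sch in simp)
qed

lemma set_draws: "finite P \<Longrightarrow> P \<noteq> {} \<Longrightarrow> xs \<in> set_pmf (draws P k) \<Longrightarrow> set xs \<subseteq> P \<and> length xs = k"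
  by (induction k arbitrary: xs) force+

lemma prob_draws_subset:
  assumes P: "finite P" "P \<noteq> {}"
  shows "measure_pmf.prob (draws P k) {xs. set xs \<subseteq> A} = (card (P \<inter> A) / card P) ^ k"
proof -
  let ?q = "real (card (P \<inter> A)) / real (card P)"
  have "emeasure (draws P k) {xs. set xs \<subseteq> A} = ennreal (?q ^ k)"
  proof (induction k)
    case 0
    then show ?case by (simp add: indicator_def)
  next
    case (Suc k)
    have pre: "(#) x -` {xs. set xs \<subseteq> A} = (if x \<in> A then {xs. set xs \<subseteq> A} else {})" for x
      by auto
    have "emeasure (draws P (Suc k)) {xs. set xs \<subseteq> A}
        = (\<Sum>x\<in>P. emeasure (draws P k) ((#) x -` {xs. set xs \<subseteq> A})) / of_nat (card P)"
      by (simp add: nn_integral_pmf_of_set[OF P(2,1)])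
    also have "(\<Sum>x\<in>P. emeasure (draws P k) ((#) x -` {xs. set xs \<subseteq> A}))
        = (\<Sum>x\<in>P. ennreal (if x \<in> A then ?q ^ k else 0))"
      by (rule sum.cong) (auto simp: pre Suc)
    also have "\<dots> = ennreal (card (P \<inter> A) * ?q ^ k)"
      using P(1) by (simp add: sum_ennreal[symmetric] sum.If_cases Int_def)
    also have "ennreal (card (P \<inter> A) * ?q ^ k) / of_nat (card P) = ennreal (?q ^ Suc k)"
      using P by (simp add: ennreal_of_nat_eq_real_of_nat divide_ennreal card_gt_0_iff field_simps)
    finally show ?case .
  qed
  then show ?thesis
    by (simp add: measure_pmf.emeasure_eq_measure)
qed

lemma arg_min_list_eqI:
  assumes "y \<in> set xs" "\<And>x. x \<in> set xs \<Longrightarrow> f y \<le> f x" "inj_on f (set xs)"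
  shows "arg_min_list f xs = y"
proof -
  have ne: "xs \<noteq> []"
    using assms(1) by auto
  have "f (arg_min_list f xs) = f y"
    unfolding f_arg_min_list_f[OF ne] using assms(1,2) by (intro Min_eqI) auto
  then show ?thesis
    using assms(1,3) arg_min_list_in[OF ne] by (auto dest: inj_onD)
qed

lemma one_minus_le_exp_minus_twice: "0 \<le> (x::real) \<Longrightarrow> x \<le> 1/2 \<Longrightarrow> exp (- 2 * x) \<le> 1 - x"
proof -
  assume x: "0 \<le> x" "x \<le> 1/2"
  have "x * x \<le> x * (1/2)"
    using x by (intro mult_left_mono) auto
  then have "- 2 * x \<le> - x - 2 * x\<^sup>2"
    by (simp add: power2_eq_square)
  also have "\<dots> \<le> ln (1 - x)"
    by (rule ln_one_minus_pos_lower_bound[OF x])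
  finally show ?thesis
    using x by (simp add: ln_ge_iff)
qed

lemma power_ratio_ge:
  assumes "1 \<le> a" "a \<le> m" "m \<le> a + 2"
  shows "1/256 \<le> (real a / real m) ^ m"
proof (cases "m \<le> 4")
  case True
  have "(1/4::real) ^ 4 \<le> (1/4) ^ m"
    using True by (intro power_decreasing) auto
  also have "\<dots> \<le> (real a / real m) ^ m"
    using assms True by (intro power_mono) (auto simp: field_simps)
  finally show ?thesis
    by (simp add: eval_nat_numeral)
next
  case False
  have "1/256 \<le> exp (-4::real)"
  proof -
    have "exp (4::real) \<le> 3 ^ 4"
      using power_mono[OF exp_le, of 4] by (simp add: exp_of_nat_mult[symmetric])
    then show ?thesis
      by (simp add: exp_minus field_simps)
  qed
  also have "exp (-4::real) = exp (- 2 * (2 / real m)) ^ m"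
    using False by (simp add: exp_of_nat_mult[symmetric])
  also have "\<dots> \<le> (1 - 2 / real m) ^ m"
    using False by (intro power_mono one_minus_le_exp_minus_twice) auto
  also have "\<dots> \<le> (real a / real m) ^ m"
  proof (intro power_mono)
    have "1 - 2 / real m = (real m - 2) / real m"
      using False by (simp add: field_simps)
    then show "1 - 2 / real m \<le> real a / real m"
      using assms(3) by (simp add: divide_right_mono)
  qed (use False in simp)
  finally show ?thesis .
qed

lemma one_minus_inverse_power_le:
  assumes "1 \<le> a" "a \<le> m"
  shows "(1 - 1 / real a) ^ m \<le> 1/2"
proof -
  have "(1 - 1 / real a) ^ m \<le> (1 - 1 / real a) ^ a"
    using assms by (intro power_decreasing) auto
  also have "\<dots> \<le> exp (-1)"
    using exp_ge_one_minus_x_over_n_power_n[of 1 a] assms by simp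
  also have "\<dots> \<le> 1/2"
    using exp_ge_add_one_self[of "1::real"] by (simp add: exp_minus field_simps)
  finally show ?thesis .
qed

lemma power_ratio_diff_ge:
  assumes a: "1 \<le> a" "a \<le> m" "m \<le> a + 2"
  shows "1/512 \<le> (real a / real m) ^ m - ((real a - 1) / real m) ^ m"
proof -
  have "(1/256) * (1/2) \<le> (real a / m) ^ m * (1 - (1 - 1 / real a) ^ m)"
    using power_ratio_ge[OF a] one_minus_inverse_power_le[OF a(1,2)] by (intro mult_mono) auto
  also have "\<dots> = (real a / m) ^ m - ((real a - 1) / m) ^ m"
  proof -
    have "(real a - 1) / m = real a / m * (1 - 1 / real a)"
      using a by (simp add: field_simps)
    then have "((real a - 1) / m) ^ m = (real a / m) ^ m * (1 - 1 / real a) ^ m"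
      by (simp only: power_mult_distrib)
    then show ?thesis
      by (simp add: right_diff_distrib)
  qed
  finally show ?thesis
    by simp
qed

text \<open>The tournament returns \<open>y\<close> whenever all draws lie in the set \<open>W\<close> of the
  \<open>a \<ge> m - 2\<close> individuals of rank at least \<open>r y\<close> and \<open>y\<close> is among them.\<close>

lemma tournament_select_top3_ge:
  assumes A: "finite A" "A \<noteq> {}" and r: "bij_betw r A {1..card A}"
    and y: "y \<in> A" "r y \<le> 3"
  shows "1/512 \<le> pmf (tournament_select A r) y"
proof -
  let ?m = "card A"
  let ?D = "draws A ?m"
  define W where "W = {x\<in>A. r x \<in> {r y..?m}}"
  define a where "a = card W"
  have ry: "1 \<le> r y" "r y \<le> ?m"
    using r y unfolding bij_betw_def by auto
  have a: "a = Suc ?m - r y"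
    unfolding a_def W_def using card_preimage_bij_betw[OF r, of "{r y..?m}"] ry by auto
  have yW: "y \<in> W" and WA: "W \<subseteq> A"
    using y ry by (auto simp: W_def)
  have "A \<inter> (W - {y}) = W - {y}"
    using WA by auto
  then have "card (A \<inter> (W - {y})) = a - 1"
    using yW finite_subset[OF WA A(1)] by (simp add: a_def)
  then have diff: "measure_pmf.prob ?D {xs. set xs \<subseteq> W - {y}} = ((real a - 1) / ?m) ^ ?m"
    using prob_draws_subset[OF A] a ry by (simp add: of_nat_diff)
  have all: "measure_pmf.prob ?D {xs. set xs \<subseteq> W} = (real a / ?m) ^ ?m"
    using prob_draws_subset[OF A] WA by (simp add: a_def Int_absorb1)
  have wins: "{xs. set xs \<subseteq> W} - {xs. set xs \<subseteq> W - {y}} \<subseteq> arg_min_list r -` {y}"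
  proof
    fix xs assume "xs \<in> {xs. set xs \<subseteq> W} - {xs. set xs \<subseteq> W - {y}}"
    then have "set xs \<subseteq> W" "y \<in> set xs"
      by auto
    moreover have "inj_on r (set xs)"
      using r WA \<open>set xs \<subseteq> W\<close> unfolding bij_betw_def by (blast intro: inj_on_subset)
    ultimately have "arg_min_list r xs = y"
      by (intro arg_min_list_eqI) (auto simp: W_def)
    then show "xs \<in> arg_min_list r -` {y}"
      by simp
  qed
  have "1/512 \<le> (real a / ?m) ^ ?m - ((real a - 1) / ?m) ^ ?m"
    using a ry y(2) by (intro power_ratio_diff_ge) auto
  also have "\<dots> = measure_pmf.prob ?D ({xs. set xs \<subseteq> W} - {xs. set xs \<subseteq> W - {y}})"
    unfolding all[symmetric] diff[symmetric] by (rule measure_pmf.finite_measure_Diff[symmetric]) auto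
  also have "\<dots> \<le> measure_pmf.prob ?D (arg_min_list r -` {y})"
    using wins by (rule measure_pmf.finite_measure_mono) simp
  also have "\<dots> = pmf (tournament_select A r) y"
    by (simp add: tournament_select_def pmf_map)
  finally show ?thesis
    by simp
qed

lemma set_pmf_tournament_select:
  assumes "finite A" "A \<noteq> {}"
  shows "set_pmf (tournament_select A r) \<subseteq> A"
proof
  fix z assume "z \<in> set_pmf (tournament_select A r)"
  then obtain xs where xs: "xs \<in> set_pmf (draws A (card A))" "z = arg_min_list r xs"
    unfolding tournament_select_def by auto
  then have "set xs \<subseteq> A" "xs \<noteq> []"
    using set_draws[OF assms xs(1)] assms by auto
  then show "z \<in> A"
    using arg_min_list_in xs(2) by blast
qed

lemma set_pmf_parent_select:
  assumes "finite A" "A \<noteq> {}" "bij_betw r A {1..card A}"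
  shows "set_pmf (parent_select sch A r) \<subseteq> A"
  using assms set_pmf_tournament_select set_pmf_rank_select
  by (auto simp: parent_select_def split: if_splits)

lemma parent_select_top3_ge:
  assumes A: "finite A" "A \<noteq> {}" "card A \<le> Suc n" and r: "bij_betw r A {1..card A}"
    and y: "y \<in> A" "r y \<le> 3"
  shows "top3_selection_bound sch n \<le> pmf (parent_select sch A r) y"
proof (cases "sch = Tournament")
  case True
  then show ?thesis
    using tournament_select_top3_ge[OF A(1,2) r y]
    by (simp add: parent_select_def top3_selection_bound_def)
next
  case False
  then show ?thesis
    using rank_select_top3_ge[OF False A r y] by (simp add: parent_select_def)
qed

section \<open>Populations and the potential\<close>

lemma population_finite: "is_population n P \<Longrightarrow> finite P"
  unfolding is_population_def by blast

lemma population_nonempty: "is_population n P \<Longrightarrow> P \<noteq> {}"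
  unfolding is_population_def by blast

lemma population_length: "is_population n P \<Longrightarrow> x \<in> P \<Longrightarrow> length x = n"
  unfolding is_population_def by blast

lemma population_weakly_dom_eq:
  "is_population n P \<Longrightarrow> x \<in> P \<Longrightarrow> y \<in> P \<Longrightarrow> weakly_dom x y \<Longrightarrow> x = y"
  unfolding is_population_def by blast

lemma population_Max_Lval_le: "is_population n P \<Longrightarrow> Max (Lval ` P) \<le> n"
  using population_finite population_nonempty population_length Lval_le_length
  by (fastforce simp: Max_le_iff)

lemma population_Max_Lval_attained: "is_population n P \<Longrightarrow> \<exists>x\<in>P. Lval x = Max (Lval ` P)"
  using Max_in[of "Lval ` P"] population_finite population_nonempty
  by (metis finite_imageI image_iff image_is_empty)

lemma population_update:
  assumes P: "is_population n P" and s: "length s = n"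
  shows "is_population n (update P s)"
proof (cases "\<exists>y\<in>P. dominates y s")
  case True
  then show ?thesis
    using P by (simp add: update_def)
next
  case False
  let ?Q = "insert s {y \<in> P. \<not> weakly_dom s y}"
  have incomparable: "\<not> weakly_dom x y" if members: "x \<in> ?Q" "y \<in> ?Q" "x \<noteq> y" for x y
  proof
    assume xy: "weakly_dom x y"
    consider "x = s" "y \<in> P" "\<not> weakly_dom s y" | "y = s" "x \<in> P" | "x \<in> P" "y \<in> P"
      using members by auto
    then show False
    proof cases
      case 2
      then have "\<not> dominates x s"
        using False by blast
      then have "weakly_dom s x"
        using xy 2 unfolding dominates_def weakly_dom_def by auto
      then show False
        using members 2 by auto
    qed (use xy members population_weakly_dom_eq[OF P] in auto)
  qed
  have "is_population n ?Q"
    unfolding is_population_def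
  proof (intro conjI ballI impI)
    show "finite ?Q"
      using population_finite[OF P] by simp
    show "?Q \<subseteq> {x. length x = n}"
      using population_length[OF P] s by auto
    show "?Q \<noteq> {}"
      by simp
    fix x y assume "x \<in> ?Q" "y \<in> ?Q" "x \<noteq> y"
    then show "\<not> weakly_dom x y"
      by (rule incomparable)
  qed
  then show ?thesis
    using False by (simp add: update_def)
qed

lemma pareto_subset_update:
  assumes "length s = n"
  shows "P \<inter> pareto_set n \<subseteq> update P s"
  using weakly_dom_pareto_eq[OF assms] by (auto simp: update_def)

lemma Max_Lval_update_mono:
  assumes P: "is_population n P" and s: "length s = n"
  shows "Max (Lval ` P) \<le> Max (Lval ` update P s)"
proof -
  obtain x where x: "x \<in> P" "Lval x = Max (Lval ` P)"
    using population_Max_Lval_attained[OF P] by blast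
  have "\<exists>z\<in>update P s. Lval x \<le> Lval z"
  proof (cases "x \<in> update P s")
    case False
    then have "weakly_dom s x" "s \<in> update P s"
      using x(1) by (auto simp: update_def split: if_splits)
    then show ?thesis
      unfolding weakly_dom_def Lval_def by (intro bexI[of _ s]) auto
  qed auto
  then obtain z where "z \<in> update P s" "Lval x \<le> Lval z"
    by blast
  then show ?thesis
    using x population_finite[OF population_update[OF P s]] by (metis Max_ge finite_imageI imageI order.trans)
qed

definition potential :: "nat \<Rightarrow> bool list set \<Rightarrow> nat" where
  "potential n P = Max (Lval ` P) + card (P \<inter> pareto_set n)"

lemma card_pareto_update_mono:
  assumes "length s = n"
  shows "card (P \<inter> pareto_set n) \<le> card (update P s \<inter> pareto_set n)"
  using pareto_subset_update[OF assms] by (intro card_mono) (auto simp: finite_pareto_set)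

lemma potential_update_mono:
  "is_population n P \<Longrightarrow> length s = n \<Longrightarrow> potential n P \<le> potential n (update P s)"
  unfolding potential_def by (intro add_mono Max_Lval_update_mono card_pareto_update_mono)

lemma potential_update_Lval_less:
  assumes P: "is_population n P" and s: "length s = n" and L: "Max (Lval ` P) < Lval s"
  shows "potential n P < potential n (update P s)"
proof -
  have "\<not> dominates y s" if "y \<in> P" for y
  proof -
    have "Lval y \<le> Max (Lval ` P)"
      using that population_finite[OF P] by simp
    then have "Lval y < Lval s"
      using L by linarith
    then show ?thesis
      by (auto simp: dominates_def weakly_dom_def Lval_def)
  qed
  then have "s \<in> update P s"
    by (auto simp: update_def)
  then have "Lval s \<le> Max (Lval ` update P s)"
    using population_finite[OF population_update[OF P s]] by simp
  then show ?thesis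
    using L card_pareto_update_mono[OF s, of P] unfolding potential_def by linarith
qed

lemma potential_update_pareto_less:
  assumes P: "is_population n P" and z: "z \<in> pareto_set n" "z \<notin> P"
  shows "potential n P < potential n (update P z)"
proof -
  have len: "length z = n" "Lval z = n"
    using z by (auto simp: mem_pareto_set_iff)
  have "\<not> dominates y z" if "y \<in> P" for y
    using that len Lval_le_length[of y] population_length[OF P that]
    by (auto simp: dominates_def weakly_dom_def Lval_def)
  then have "z \<in> update P z"
    by (auto simp: update_def)
  then have "P \<inter> pareto_set n \<subset> update P z \<inter> pareto_set n"
    using pareto_subset_update[OF len(1)] z by blast
  then have "card (P \<inter> pareto_set n) < card (update P z \<inter> pareto_set n)"
    by (intro psubset_card_mono) (auto simp: finite_pareto_set)
  then show ?thesis
    using Max_Lval_update_mono[OF P len(1)] unfolding potential_def by linarith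
qed

lemma finished_if_pareto_subset:
  assumes P: "is_population n P" and sub: "pareto_set n \<subseteq> P"
  shows "finished n P"
proof -
  have "x \<in> pareto_set n" if "x \<in> P" for x
  proof -
    have len: "length x = n"
      using population_length[OF P that] .
    then have "LO x \<le> n"
      using LO_le_length by metis
    then have "pareto_point n (LO x) \<in> P"
      using sub pareto_point_mem_pareto_set by blast
    moreover have "weakly_dom (pareto_point n (LO x)) x"
      using \<open>LO x \<le> n\<close> LO_plus_TZ_le[of x] len by (simp add: weakly_dom_def)
    ultimately have "pareto_point n (LO x) = x"
      using population_weakly_dom_eq[OF P _ that] by blast
    then show ?thesis
      using pareto_point_mem_pareto_set[OF \<open>LO x \<le> n\<close>] by simp
  qed
  then show ?thesis
    using sub by (auto simp: finished_def pareto_front_def)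
qed

lemma potential_less_if_unfinished:
  assumes P: "is_population n P" and "\<not> finished n P"
  shows "potential n P < 2 * n + 1"
proof -
  have "P \<inter> pareto_set n \<subset> pareto_set n"
    using assms finished_if_pareto_subset by blast
  then have "card (P \<inter> pareto_set n) < Suc n"
    using psubset_card_mono[OF finite_pareto_set] card_pareto_set by metis
  then show ?thesis
    using population_Max_Lval_le[OF P] unfolding potential_def by linarith
qed

lemma population_front:
  assumes P: "is_population n P"
  shows "is_population n (front_of P)"
proof -
  have "front_of P \<noteq> {}"
    using population_Max_Lval_attained[OF P] by (auto simp: front_of_def)
  then show ?thesis
    using P unfolding is_population_def front_of_def by auto
qed

lemma front_subset: "front_of P \<subseteq> P"
  unfolding front_of_def by auto

lemma front_eq_pareto:
  assumes P: "is_population n P" and "P \<inter> pareto_set n \<noteq> {}"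
  shows "front_of P = P \<inter> pareto_set n"
proof -
  obtain y where "y \<in> P" "Lval y = n"
    using assms(2) by (auto simp: mem_pareto_set_iff)
  then have "Max (Lval ` P) = n"
    using population_Max_Lval_le[OF P] population_finite[OF P]
    by (metis Max_ge antisym finite_imageI imageI)
  then show ?thesis
    using population_length[OF P] by (auto simp: front_of_def mem_pareto_set_iff)
qed

lemma card_front_le:
  assumes P: "is_population n P"
  shows "card (front_of P) \<le> Suc n"
proof -
  have "inj_on LO (front_of P)"
  proof
    fix x y assume "x \<in> front_of P" "y \<in> front_of P" "LO x = LO y"
    then have "weakly_dom x y"
      by (auto simp: front_of_def weakly_dom_def Lval_def)
    moreover have "x \<in> P" "y \<in> P"
      using \<open>x \<in> front_of P\<close> \<open>y \<in> front_of P\<close> front_subset by auto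
    ultimately show "x = y"
      using population_weakly_dom_eq[OF P] by blast
  qed
  moreover have "LO x \<le> n" if "x \<in> front_of P" for x
    using that front_subset population_length[OF P] LO_le_length[of x] by auto
  then have "LO ` front_of P \<subseteq> {..n}"
    by auto
  ultimately show ?thesis
    using card_mono[of "{..n}" "LO ` front_of P"] by (simp add: card_image)
qed

section \<open>Diversity on the Pareto front\<close>

lemma pareto_point_inner:
  assumes "0 < i" "i < n"
  shows "pareto_point n i \<in> inner_strings n"
proof -
  have "pareto_point n i ! 0" "\<not> pareto_point n i ! (n - 1)"
    using assms by (auto simp: nth_pareto_point)
  then have "pareto_point n i \<noteq> replicate n False" "pareto_point n i \<noteq> replicate n True"
    using assms by auto
  then show ?thesis
    using assms by (simp add: inner_strings_def)
qed

lemma good_if_missing_neighbour: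
  assumes "P \<subseteq> {x. length x = n}" "x \<in> P \<inter> pareto_set n"
    and "y \<in> pareto_set n" "y \<notin> P" "hamming_nb x y"
  shows "good n P x"
proof -
  have "fobj y \<notin> fobj ` P"
  proof
    assume "fobj y \<in> fobj ` P"
    then obtain x' where "x' \<in> P" "fobj x' = fobj y"
      by auto
    then have "x' = y"
      using fobj_eq_pareto_eq[of x' n y] assms(1,3) by auto
    then show False
      using assms(4) \<open>x' \<in> P\<close> by simp
  qed
  then show ?thesis
    using assms unfolding good_def by blast
qed

lemma missing_neighbour_if_good: "good n P x \<Longrightarrow> \<exists>y\<in>pareto_set n. y \<notin> P \<and> hamming_nb x y"
  unfolding good_def by blast

lemma neighbour_closed_atMost_subset:
  fixes F :: "nat set"
  assumes closed: "\<And>i. 0 < i \<Longrightarrow> i < n \<Longrightarrow> i \<in> F \<Longrightarrow> i - 1 \<in> F \<and> Suc i \<in> F"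
    and j: "0 < j" "j < n" "j \<in> F"
  shows "{..n} \<subseteq> F"
proof -
  have up: "j + m \<in> F" if "j + m \<le> n" for m
    using that
  proof (induction m)
    case (Suc m)
    then show ?case
      using closed[of "j + m"] j by simp
  qed (use j in simp)
  have down: "j - m \<in> F" if "m \<le> j" for m
    using that
  proof (induction m)
    case (Suc m)
    then have "j - m \<in> F" "0 < j - m" "j - m < n"
      using j by auto
    then have "j - m - 1 \<in> F"
      using closed by blast
    then show ?case
      by simp
  qed (use j in simp)
  show ?thesis
  proof
    fix k assume "k \<in> {..n}"
    show "k \<in> F"
    proof (cases "j \<le> k")
      case True
      then show ?thesis
        using up[of "k - j"] \<open>k \<in> {..n}\<close> by simp
    next
      case False
      then show ?thesis
        using down[of "j - k"] by simp
    qed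
  qed
qed

lemma best_good_inner_rank_le_3:
  assumes P: "is_population n P" and P_pareto: "P \<subseteq> pareto_set n"
    and df: "diversity_favouring n score (inner_strings n)" and vr: "valid_ranking n score rk"
    and ex: "\<exists>x\<in>P \<inter> inner_strings n. good n P x"
  shows "\<exists>y\<in>P. good n P y \<and> rk P y \<le> 3"
proof -
  let ?G = "{x \<in> P \<inter> inner_strings n. good n P x}"
  obtain y where y: "y \<in> ?G" and least: "\<And>x. x \<in> ?G \<Longrightarrow> rk P y \<le> rk P x"
    using ex ex_has_least_nat[of "\<lambda>x. x \<in> ?G" _ "rk P"] by blast
  have r: "bij_betw (rk P) P {1..card P}"
    and r_mono: "\<And>x x'. x \<in> P \<Longrightarrow> x' \<in> P \<Longrightarrow> score x P > score x' P \<Longrightarrow> rk P x < rk P x'"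
    using vr P unfolding valid_ranking_def by blast+
  have "x \<in> {replicate n False, replicate n True}" if "x \<in> P" "rk P x < rk P y" for x
  proof (rule ccontr)
    assume "x \<notin> {replicate n False, replicate n True}"
    then have inner: "x \<in> inner_strings n"
      using population_length[OF P that(1)] by (simp add: inner_strings_def)
    show False
    proof (cases "good n P x")
      case True
      then have "rk P y \<le> rk P x"
        using inner that(1) by (intro least) blast
      then show False
        using that(2) by simp
    next
      case False
      have "score x P < score y P"
      proof (rule df[unfolded diversity_favouring_def, rule_format, OF P])
        show "bad n P x \<and> good n P y"
          using False that(1) P_pareto y by (auto simp: bad_def)
      qed (use that(1) inner y P_pareto in auto)
      then show False
        using r_mono[of y x] y that by auto
    qed
  qed
  then have "rk P y \<le> Suc (card {replicate n False, replicate n True})"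
    using y by (intro rank_le_Suc_card[OF r]) auto
  also have "\<dots> \<le> 3"
    by (simp add: card_insert_if)
  finally show ?thesis
    using y by blast
qed

lemma interior_pareto_points_absent:
  assumes P: "is_population n P" and unfinished: "\<not> finished n P"
    and no_good: "\<forall>x\<in>P \<inter> pareto_set n \<inter> inner_strings n. \<not> good n (P \<inter> pareto_set n) x"
    and i: "0 < i" "i < n"
  shows "pareto_point n i \<notin> P"
proof
  assume "pareto_point n i \<in> P"
  define F where "F = {k. k \<le> n \<and> pareto_point n k \<in> P}"
  have "k - 1 \<in> F \<and> Suc k \<in> F" if k: "0 < k" "k < n" "k \<in> F" for k
  proof -
    have not_good: "\<not> good n (P \<inter> pareto_set n) (pareto_point n k)"
      using no_good k pareto_point_inner pareto_point_mem_pareto_set by (simp add: F_def)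
    have "P \<inter> pareto_set n \<subseteq> {x. length x = n}"
      using population_length[OF P] by auto
    have present: "pareto_point n l \<in> P"
      if "l \<le> n" "hamming_nb (pareto_point n k) (pareto_point n l)" for l
    proof (rule ccontr)
      assume "pareto_point n l \<notin> P"
      then have "good n (P \<inter> pareto_set n) (pareto_point n k)"
        using that k population_length[OF P]
        by (intro good_if_missing_neighbour[where y = "pareto_point n l"])
          (auto simp: F_def pareto_point_mem_pareto_set)
      then show False
        using not_good by blast
    qed
    have "pareto_point n (k - 1) \<in> P"
      using k hamming_nb_pareto_point_Suc[of "k - 1" n] hamming_nb_commute
      by (intro present) auto
    moreover have "pareto_point n (Suc k) \<in> P"
      using k hamming_nb_pareto_point_Suc[of k n] by (intro present) auto
    ultimately show ?thesis
      using k by (simp add: F_def)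
  qed
  then have "{..n} \<subseteq> F"
    using neighbour_closed_atMost_subset[of n F i] i \<open>pareto_point n i \<in> P\<close> by (simp add: F_def)
  then have "pareto_set n \<subseteq> P"
    by (auto simp: pareto_set_eq F_def)
  then show False
    using finished_if_pareto_subset[OF P] unfinished by blast
qed

lemma extreme_front_improvable:
  assumes P: "is_population n P" and F: "front_of P = P \<inter> pareto_set n" and n: "2 \<le> n"
    and vr: "valid_ranking n score rk"
    and absent: "\<And>i. 0 < i \<Longrightarrow> i < n \<Longrightarrow> pareto_point n i \<notin> P"
  shows "\<exists>y\<in>front_of P. \<exists>z\<in>pareto_set n. z \<notin> P \<and> hamming_nb y z \<and> rk (front_of P) y \<le> 3"
proof -
  let ?F = "front_of P"
  have PF: "is_population n ?F"
    using population_front[OF P] .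
  have extremes: "?F \<subseteq> {pareto_point n 0, pareto_point n n}"
  proof
    fix x assume "x \<in> ?F"
    then obtain i where "i \<le> n" "x = pareto_point n i" "x \<in> P"
      using F by (auto simp: pareto_set_eq)
    then show "x \<in> {pareto_point n 0, pareto_point n n}"
      using absent[of i] by (cases "i = 0 \<or> i = n") auto
  qed
  then have "card ?F \<le> card {pareto_point n 0, pareto_point n n}"
    by (intro card_mono) auto
  also have "\<dots> \<le> 2"
    by (simp add: card_insert_if)
  finally have "card ?F \<le> 2" .
  obtain y where y: "y \<in> ?F"
    using population_nonempty[OF PF] by blast
  have "bij_betw (rk ?F) ?F {1..card ?F}"
    using vr PF unfolding valid_ranking_def by blast
  then have "rk ?F y \<le> 3"
    using y \<open>card ?F \<le> 2\<close> bij_betwE by fastforce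
  consider "y = pareto_point n 0" | "y = pareto_point n n"
    using y extremes by blast
  then have "\<exists>j. 0 < j \<and> j < n \<and> hamming_nb y (pareto_point n j)"
  proof cases
    case 1
    then show ?thesis
      using n hamming_nb_pareto_point_Suc[of 0 n] by (intro exI[of _ 1]) auto
  next
    case 2
    then show ?thesis
      using n hamming_nb_pareto_point_Suc[of "n - 1" n] hamming_nb_commute
      by (intro exI[of _ "n - 1"]) auto
  qed
  then obtain j where j: "0 < j" "j < n" "hamming_nb y (pareto_point n j)"
    by blast
  then have "pareto_point n j \<in> pareto_set n" "pareto_point n j \<notin> P"
    using absent[OF j(1,2)] pareto_point_mem_pareto_set[of j n] by auto
  then show ?thesis
    using y \<open>rk ?F y \<le> 3\<close> j(3) by blast
qed

lemma front_has_top3_improvable: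
  assumes P: "is_population n P" and reached: "P \<inter> pareto_set n \<noteq> {}"
    and unfinished: "\<not> finished n P" and n: "2 \<le> n"
    and df: "diversity_favouring n score (inner_strings n)" and vr: "valid_ranking n score rk"
  shows "\<exists>y\<in>front_of P. \<exists>z\<in>pareto_set n. z \<notin> P \<and> hamming_nb y z \<and> rk (front_of P) y \<le> 3"
proof -
  let ?F = "front_of P"
  have F: "?F = P \<inter> pareto_set n"
    using front_eq_pareto[OF P reached] .
  show ?thesis
  proof (cases "\<exists>x\<in>?F \<inter> inner_strings n. good n ?F x")
    case True
    then obtain y where y: "y \<in> ?F" "good n ?F y" "rk ?F y \<le> 3"
      using best_good_inner_rank_le_3[OF population_front[OF P] _ df vr] F by blast
    then obtain z where "z \<in> pareto_set n" "z \<notin> ?F" "hamming_nb y z"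
      using missing_neighbour_if_good by blast
    then show ?thesis
      using y F by blast
  next
    case False
    then have "\<forall>x\<in>P \<inter> pareto_set n \<inter> inner_strings n. \<not> good n (P \<inter> pareto_set n) x"
      using F by auto
    then show ?thesis
      using extreme_front_improvable[OF P F n vr] interior_pareto_points_absent[OF P unfinished]
      by blast
  qed
qed

section \<open>One iteration\<close>

lemma prob_bind_ge_pmf:
  "pmf M x * measure_pmf.prob (N x) E \<le> measure_pmf.prob (bind_pmf M N) E"
proof -
  have "(\<integral>\<^sup>+s. ennreal (measure_pmf.prob (N x) E) * indicator {x} s \<partial>M)
      = ennreal (measure_pmf.prob (N x) E) * emeasure M {x}"
    by (rule nn_integral_cmult_indicator) simp
  then have "ennreal (pmf M x * measure_pmf.prob (N x) E)
      = (\<integral>\<^sup>+s. ennreal (measure_pmf.prob (N x) E) * indicator {x} s \<partial>M)"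
    by (simp add: emeasure_pmf_single ennreal_mult mult.commute)
  also have "\<dots> \<le> (\<integral>\<^sup>+s. emeasure (N s) E \<partial>M)"
    by (rule nn_integral_mono) (auto simp: indicator_def measure_pmf.emeasure_eq_measure)
  also have "\<dots> = emeasure (bind_pmf M N) E"
    by simp
  finally show ?thesis
    by (simp add: measure_pmf.emeasure_eq_measure ennreal_le_iff)
qed

lemma prob_bind_ge:
  assumes "\<And>x. x \<in> set_pmf M \<Longrightarrow> c \<le> measure_pmf.prob (N x) E" and "0 \<le> c"
  shows "c \<le> measure_pmf.prob (bind_pmf M N) E"
proof -
  have "ennreal c = (\<integral>\<^sup>+x. ennreal c \<partial>M)"
    by simp
  also have "\<dots> \<le> (\<integral>\<^sup>+x. emeasure (N x) E \<partial>M)"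
    using assms(1) by (intro nn_integral_mono_AE AE_pmfI) (simp add: measure_pmf.emeasure_eq_measure)
  also have "\<dots> = emeasure (bind_pmf M N) E"
    by simp
  finally show ?thesis
    using assms(2) by (simp add: measure_pmf.emeasure_eq_measure)
qed

lemma pmf_le_prob_map: "f x \<in> E \<Longrightarrow> pmf M x \<le> measure_pmf.prob (map_pmf f M) E"
  unfolding measure_pmf_single[symmetric]
  by (simp add: measure_pmf.finite_measure_mono)

lemma gsemo_step_support:
  assumes P: "is_population n P" and vr: "valid_ranking n score rk"
    and Q: "Q \<in> set_pmf (gsemo_step n sch rk P)"
  shows "is_population n Q \<and> potential n P \<le> potential n Q"
proof -
  let ?F = "front_of P"
  have PF: "is_population n ?F"
    using population_front[OF P] .
  have "bij_betw (rk ?F) ?F {1..card ?F}"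
    using vr PF unfolding valid_ranking_def by blast
  then have "set_pmf (parent_select sch ?F (rk ?F)) \<subseteq> P"
    using set_pmf_parent_select population_finite[OF PF] population_nonempty[OF PF] front_subset
    by blast
  moreover obtain s s' where "s \<in> set_pmf (parent_select sch ?F (rk ?F))"
    "s' \<in> set_pmf (mutate n s)" "Q = update P s'"
    using Q unfolding gsemo_step_def Let_def by auto
  ultimately have "length s' = n" "Q = update P s'"
    using length_mutate population_length[OF P] by auto
  then show ?thesis
    using population_update[OF P] potential_update_mono[OF P] by simp
qed

lemma prob_mutate_update_ge:
  assumes "2 \<le> n" "length s = n" "hamming_nb s t" "update P t \<in> E"
  shows "exp (-1) / real n \<le> measure_pmf.prob (map_pmf (update P) (mutate n s)) E"
  using pmf_mutate_hamming_nb[OF assms(1-3)] pmf_le_prob_map[of "update P" t E "mutate n s", OF assms(4)]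
  by linarith

lemma front_improvable_before_pareto:
  assumes P: "is_population n P" and "P \<inter> pareto_set n = {}" and s: "s \<in> front_of P"
  shows "length s = n \<and> hamming_nb s (s[LO s := True])
           \<and> potential n P < potential n (update P (s[LO s := True]))"
proof -
  have len: "length s = n" and "s \<notin> pareto_set n" and "Lval s = Max (Lval ` P)"
    using assms population_length[OF P] by (auto simp: front_of_def)
  then have "hamming_nb s (s[LO s := True])" and "Max (Lval ` P) < Lval (s[LO s := True])"
    using set_first_zero_improves[OF len] by auto
  then show ?thesis
    using potential_update_Lval_less[OF P] len by simp
qed

lemma gsemo_step_progress:
  assumes P: "is_population n P" and n: "2 \<le> n" and unfinished: "\<not> finished n P"
    and df: "diversity_favouring n score (inner_strings n)" and vr: "valid_ranking n score rk"
  shows "top3_selection_bound sch n * (exp (-1) / real n)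
           \<le> measure_pmf.prob (gsemo_step n sch rk P) {Q. potential n P < potential n Q}"
proof -
  let ?F = "front_of P"
  let ?S = "parent_select sch ?F (rk ?F)"
  let ?N = "\<lambda>s. map_pmf (update P) (mutate n s)"
  let ?E = "{Q. potential n P < potential n Q}"
  have PF: "is_population n ?F"
    using population_front[OF P] .
  have r: "bij_betw (rk ?F) ?F {1..card ?F}"
    using vr PF unfolding valid_ranking_def by blast
  have step: "gsemo_step n sch rk P = bind_pmf ?S ?N"
    unfolding gsemo_step_def Let_def ..
  have c: "0 \<le> exp (-1) / real n" "0 \<le> top3_selection_bound sch n" "top3_selection_bound sch n \<le> 1"
    using top3_selection_bound_pos[of sch n] top3_selection_bound_le_1 by auto
  show ?thesis
  proof (cases "P \<inter> pareto_set n = {}")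
    case True
    have "exp (-1) / real n \<le> measure_pmf.prob (bind_pmf ?S ?N) ?E"
    proof (rule prob_bind_ge[OF _ c(1)])
      fix s assume "s \<in> set_pmf ?S"
      then have "s \<in> ?F"
        using set_pmf_parent_select[OF population_finite[OF PF] population_nonempty[OF PF] r] by blast
      then have "length s = n" "hamming_nb s (s[LO s := True])" "update P (s[LO s := True]) \<in> ?E"
        using front_improvable_before_pareto[OF P True] by auto
      then show "exp (-1) / real n \<le> measure_pmf.prob (?N s) ?E"
        by (rule prob_mutate_update_ge[OF n])
    qed
    moreover have "top3_selection_bound sch n * (exp (-1) / real n) \<le> exp (-1) / real n"
      using c by (intro mult_left_le_one_le) auto
    ultimately show ?thesis
      using step by simp
  next
    case False
    then obtain y z where y: "y \<in> ?F" "rk ?F y \<le> 3"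
      and z: "z \<in> pareto_set n" "z \<notin> P" "hamming_nb y z"
      using front_has_top3_improvable[OF P _ unfinished n df vr] by blast
    have "top3_selection_bound sch n \<le> pmf ?S y"
      using parent_select_top3_ge[OF population_finite[OF PF] population_nonempty[OF PF]
          card_front_le[OF P] r y] .
    moreover have "exp (-1) / real n \<le> measure_pmf.prob (?N y) ?E"
      using potential_update_pareto_less[OF P z(1,2)]
      by (intro prob_mutate_update_ge[OF n population_length[OF PF y(1)] z(3)]) simp
    ultimately have "top3_selection_bound sch n * (exp (-1) / real n)
        \<le> pmf ?S y * measure_pmf.prob (?N y) ?E"
      using c by (intro mult_mono) auto
    also have "\<dots> \<le> measure_pmf.prob (bind_pmf ?S ?N) ?E"
      by (rule prob_bind_ge_pmf)
    finally show ?thesis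
      using step by simp
  qed
qed

section \<open>Drift on a monotone potential\<close>

locale monotone_potential_chain =
  fixes D :: "nat \<Rightarrow> 'a pmf" and step :: "'a \<Rightarrow> 'a pmf" and fin :: "'a \<Rightarrow> bool"
    and I :: "'a \<Rightarrow> bool" and \<Phi> :: "'a \<Rightarrow> nat" and K :: nat and p :: real
  assumes D_Suc: "\<And>t. D (Suc t) = bind_pmf (D t) (\<lambda>x. if fin x then return_pmf x else step x)"
    and invariant_init: "\<And>x. x \<in> set_pmf (D 0) \<Longrightarrow> I x"
    and invariant_step: "\<And>x y. I x \<Longrightarrow> \<not> fin x \<Longrightarrow> y \<in> set_pmf (step x) \<Longrightarrow> I y \<and> \<Phi> x \<le> \<Phi> y"
    and potential_less: "\<And>x. I x \<Longrightarrow> \<not> fin x \<Longrightarrow> \<Phi> x < K"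
    and progress: "\<And>x. I x \<Longrightarrow> \<not> fin x \<Longrightarrow> p \<le> measure_pmf.prob (step x) {y. \<Phi> x < \<Phi> y}"
    and p_pos: "0 < p"
begin

text \<open>An upper bound on the expected remaining time: it drops by at least one in
  expectation in every step before the target is hit.\<close>

definition remaining :: "'a \<Rightarrow> ennreal" where
  "remaining x = (if fin x then 0 else ennreal ((real K - real (\<Phi> x)) / p))"

lemma invariant: "x \<in> set_pmf (D t) \<Longrightarrow> I x"
proof (induction t arbitrary: x)
  case 0
  then show ?case by (rule invariant_init)
next
  case (Suc t)
  then obtain x0 where "x0 \<in> set_pmf (D t)" "x \<in> set_pmf (if fin x0 then return_pmf x0 else step x0)"
    by (auto simp: D_Suc)
  then show ?case
    using Suc.IH invariant_step by (cases "fin x0") auto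
qed

lemma remaining_le_after_step:
  assumes x: "I x" "\<not> fin x" and y: "y \<in> set_pmf (step x)"
  shows "remaining y \<le> ennreal ((real K - real (\<Phi> x) - 1) / p)
           + ennreal (1 / p) * indicator (- {y. \<Phi> x < \<Phi> y}) y"
proof -
  let ?b = "(real K - real (\<Phi> x) - 1) / p"
  have b: "0 \<le> ?b"
    using potential_less[OF x] p_pos by simp
  have "(real K - real (\<Phi> y)) / p \<le> ?b + 1 / p * indicator (- {y. \<Phi> x < \<Phi> y}) y"
  proof (cases "\<Phi> x < \<Phi> y")
    case True
    then have "real K - real (\<Phi> y) \<le> real K - real (\<Phi> x) - 1"
      by simp
    then show ?thesis
      using True p_pos by (simp add: divide_right_mono)
  next
    case False
    then have "real K - real (\<Phi> y) \<le> real K - real (\<Phi> x)"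
      using invariant_step[OF x y] by simp
    then show ?thesis
      using False p_pos by (simp add: divide_right_mono diff_divide_distrib)
  qed
  then have "ennreal ((real K - real (\<Phi> y)) / p)
      \<le> ennreal (?b + 1 / p * indicator (- {y. \<Phi> x < \<Phi> y}) y)"
    by (rule ennreal_leI)
  also have "\<dots> = ennreal ?b + ennreal (1 / p) * indicator (- {y. \<Phi> x < \<Phi> y}) y"
    using b p_pos by (simp add: ennreal_plus ennreal_mult indicator_def)
  finally show ?thesis
    by (simp add: remaining_def)
qed

lemma remaining_step:
  assumes x: "I x" "\<not> fin x"
  shows "(\<integral>\<^sup>+y. remaining y \<partial>step x) + 1 \<le> remaining x"
proof -
  let ?E = "{y. \<Phi> x < \<Phi> y}"
  let ?q = "measure_pmf.prob (step x) ?E"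
  define b where "b = (real K - real (\<Phi> x) - 1) / p"
  define c where "c = 1 / p"
  have "p \<le> ?q" "?q \<le> 1"
    using progress[OF x] by (auto simp: measure_pmf.prob_le_1)
  have below: "real (\<Phi> x) + 1 \<le> real K"
    using potential_less[OF x] by simp
  have b: "0 \<le> b" and c: "0 \<le> c"
    using below p_pos by (auto simp: b_def c_def)
  have "(\<integral>\<^sup>+y. remaining y \<partial>step x) \<le> (\<integral>\<^sup>+y. ennreal b + ennreal c * indicator (- ?E) y \<partial>step x)"
    unfolding b_def c_def using remaining_le_after_step[OF x] by (intro nn_integral_mono_AE AE_pmfI)
  also have "\<dots> = ennreal b + ennreal c * emeasure (step x) (- ?E)"
    by (simp add: nn_integral_add nn_integral_cmult_indicator measure_pmf.emeasure_space_1)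
  also have "emeasure (step x) (- ?E) = ennreal (1 - ?q)"
    using measure_pmf.prob_compl[of ?E "step x"]
    by (simp add: measure_pmf.emeasure_eq_measure Compl_eq_Diff_UNIV)
  also have "ennreal b + ennreal c * ennreal (1 - ?q) = ennreal (b + c * (1 - ?q))"
    using b c \<open>?q \<le> 1\<close> by (simp add: ennreal_plus ennreal_mult)
  also have "\<dots> \<le> ennreal (b + c * (1 - p))"
    using \<open>p \<le> ?q\<close> c by (intro ennreal_leI add_left_mono mult_left_mono) auto
  also have "b + c * (1 - p) = (real K - real (\<Phi> x)) / p - 1"
    using p_pos by (simp add: b_def c_def field_simps)
  finally have "(\<integral>\<^sup>+y. remaining y \<partial>step x) + 1 \<le> ennreal ((real K - real (\<Phi> x)) / p - 1) + 1"
    by (rule add_right_mono)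
  also have "\<dots> = remaining x"
  proof -
    have "p \<le> real K - real (\<Phi> x)"
      using below \<open>p \<le> ?q\<close> \<open>?q \<le> 1\<close> by linarith
    then have "1 \<le> (real K - real (\<Phi> x)) / p"
      using p_pos by simp
    then have "ennreal ((real K - real (\<Phi> x)) / p - 1) + ennreal 1
        = ennreal ((real K - real (\<Phi> x)) / p - 1 + 1)"
      by (intro ennreal_plus[symmetric]) auto
    then show ?thesis
      using x by (simp add: remaining_def)
  qed
  finally show ?thesis .
qed

lemma expected_remaining_Suc:
  "(\<integral>\<^sup>+x. remaining x \<partial>D (Suc t)) + ennreal (measure_pmf.prob (D t) {x. \<not> fin x})
     \<le> (\<integral>\<^sup>+x. remaining x \<partial>D t)"
proof -
  have "ennreal (measure_pmf.prob (D t) {x. \<not> fin x}) = (\<integral>\<^sup>+x. of_bool (\<not> fin x) \<partial>D t)"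
    by (simp add: measure_pmf.emeasure_eq_measure[symmetric] nn_integral_indicator[symmetric]
        indicator_def del: nn_integral_indicator)
  then have "(\<integral>\<^sup>+x. remaining x \<partial>D (Suc t)) + ennreal (measure_pmf.prob (D t) {x. \<not> fin x})
      = (\<integral>\<^sup>+x. (\<integral>\<^sup>+y. remaining y \<partial>(if fin x then return_pmf x else step x))
          + of_bool (\<not> fin x) \<partial>D t)"
    by (simp add: D_Suc nn_integral_add)
  also have "\<dots> \<le> (\<integral>\<^sup>+x. remaining x \<partial>D t)"
  proof (intro nn_integral_mono_AE AE_pmfI)
    fix x assume "x \<in> set_pmf (D t)"
    then show "(\<integral>\<^sup>+y. remaining y \<partial>(if fin x then return_pmf x else step x)) + of_bool (\<not> fin x)
        \<le> remaining x"
      using remaining_step invariant by (cases "fin x") auto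
  qed
  finally show ?thesis .
qed

theorem suminf_prob_unfinished_le:
  "(\<Sum>t. ennreal (measure_pmf.prob (D t) {x. \<not> fin x})) \<le> ennreal (real K / p)"
proof -
  define R where "R t = (\<integral>\<^sup>+x. remaining x \<partial>D t)" for t
  define q where "q t = ennreal (measure_pmf.prob (D t) {x. \<not> fin x})" for t
  have partial: "R N + (\<Sum>t<N. q t) \<le> R 0" for N
  proof (induction N)
    case (Suc N)
    have "R (Suc N) + (\<Sum>t<Suc N. q t) = (R (Suc N) + q N) + (\<Sum>t<N. q t)"
      by (simp add: add_ac)
    also have "\<dots> \<le> R N + (\<Sum>t<N. q t)"
      unfolding R_def q_def by (intro add_right_mono expected_remaining_Suc)
    also have "\<dots> \<le> R 0"
      by (rule Suc.IH)
    finally show ?case .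
  qed simp
  have "R 0 \<le> (\<integral>\<^sup>+x. ennreal (real K / p) \<partial>D 0)"
    unfolding R_def using p_pos
    by (intro nn_integral_mono) (auto simp: remaining_def divide_right_mono intro!: ennreal_leI)
  then have R0: "R 0 \<le> ennreal (real K / p)"
    by (simp add: measure_pmf.emeasure_space_1)
  have "(\<Sum>t. q t) = (SUP N. \<Sum>t<N. q t)"
    by (rule suminf_eq_SUP)
  also have "\<dots> \<le> ennreal (real K / p)"
  proof (rule SUP_least)
    fix N
    have "(\<Sum>t<N. q t) \<le> R N + (\<Sum>t<N. q t)"
      by simp
    also have "\<dots> \<le> ennreal (real K / p)"
      using partial R0 by (rule order.trans)
    finally show "(\<Sum>t<N. q t) \<le> ennreal (real K / p)" .
  qed
  finally show ?thesis
    by (simp add: q_def)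
qed

end

section \<open>Expected optimisation time\<close>

lemma population_init_pop:
  assumes "P \<in> set_pmf (init_pop n)"
  shows "is_population n P"
proof -
  have "finite {x :: bool list. length x = n}" "{x :: bool list. length x = n} \<noteq> {}"
    using finite_lists_length_eq[of "UNIV :: bool set" n] by (auto intro: exI[of _ "replicate n True"])
  then show ?thesis
    using assms by (auto simp: init_pop_def is_population_def)
qed

lemma expected_time_le:
  assumes n: "2 \<le> n"
    and df: "diversity_favouring n score (inner_strings n)" and vr: "valid_ranking n score rk"
  shows "expected_time n sch rk
           \<le> ennreal (real (2 * n + 1) / (top3_selection_bound sch n * (exp (-1) / real n)))"
proof -
  interpret monotone_potential_chain "state_dist n sch rk" "gsemo_step n sch rk" "finished n"
    "is_population n" "potential n" "2 * n + 1" "top3_selection_bound sch n * (exp (-1) / real n)"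
  proof
    show "0 < top3_selection_bound sch n * (exp (-1) / real n)"
      using n top3_selection_bound_pos by simp
  qed (use population_init_pop gsemo_step_support[OF _ vr] potential_less_if_unfinished
        gsemo_step_progress[OF _ n _ df vr] in auto)
  show ?thesis
    using suminf_prob_unfinished_le unfolding expected_time_def by simp
qed

lemma expected_time_le_square:
  assumes n: "2 \<le> n" and c: "0 < c" "c \<le> top3_selection_bound sch n"
    and df: "diversity_favouring n score (inner_strings n)" and vr: "valid_ranking n score rk"
  shows "expected_time n sch rk \<le> ennreal (9 * real n ^ 2 / c)"
proof -
  have "real (2 * n + 1) / (top3_selection_bound sch n * (exp (-1) / real n))
      = real (2 * n + 1) * real n * exp 1 / top3_selection_bound sch n"
    using n by (simp add: exp_minus field_simps)
  also have "\<dots> \<le> (3 * real n) * real n * 3 / c"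
    using n c exp_le by (intro frac_le mult_mono) auto
  also have "\<dots> = 9 * real n ^ 2 / c"
    by (simp add: power2_eq_square)
  finally have "real (2 * n + 1) / (top3_selection_bound sch n * (exp (-1) / real n))
      \<le> 9 * real n ^ 2 / c" .
  with expected_time_le[OF n df vr] show ?thesis
    using ennreal_leI order.trans by blast
qed

lemma top3_selection_bound_Harmonic_ge:
  assumes "2 \<le> n"
  shows "1 / (12 * ln (real n)) \<le> top3_selection_bound Harmonic n"
proof -
  have "real n * 2 \<le> real n * real n"
    using assms by (intro mult_left_mono) auto
  then have "real n + 1 \<le> real n ^ 2"
    unfolding power2_eq_square using assms by linarith
  then have "ln (real n + 1) \<le> ln (real n ^ 2)"
    using assms by (subst ln_le_cancel_iff) auto
  also have "\<dots> = 2 * ln (real n)"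
    using assms by (simp add: ln_realpow)
  finally have "ln (real n + 1) \<le> 2 * ln (real n)" .
  moreover have "ln 2 \<le> ln (real n)"
    using assms by simp
  ultimately have "3 * (1 + ln (real n + 1)) \<le> 12 * ln (real n)"
    using ln2_ge_two_thirds by argo
  then show ?thesis
    using assms by (simp add: top3_selection_bound_def divide_left_mono add_pos_nonneg)
qed

theorem theorem5:
  shows "(\<forall>sch \<in> {Exponential, PowerLaw, Tournament}. \<exists>C>0. \<forall>n\<ge>2.
            \<forall>(score :: bool list \<Rightarrow> bool list set \<Rightarrow> real) rk.
              diversity_favouring n score (inner_strings n) \<and> valid_ranking n score rk \<longrightarrow>
              expected_time n sch rk \<le> ennreal (C * real n ^ 2))
       \<and> (\<exists>C>0. \<forall>n\<ge>2.
            \<forall>(score :: bool list \<Rightarrow> bool list set \<Rightarrow> real) rk.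
              diversity_favouring n score (inner_strings n) \<and> valid_ranking n score rk \<longrightarrow>
              expected_time n Harmonic rk \<le> ennreal (C * real n ^ 2 * ln (real n)))"
proof (intro conjI ballI)
  fix sch :: scheme assume "sch \<in> {Exponential, PowerLaw, Tournament}"
  then have bound: "1/512 \<le> top3_selection_bound sch n" for n
    by (auto simp: top3_selection_bound_def)
  show "\<exists>C>0. \<forall>n\<ge>2. \<forall>(score :: bool list \<Rightarrow> bool list set \<Rightarrow> real) rk.
      diversity_favouring n score (inner_strings n) \<and> valid_ranking n score rk \<longrightarrow>
      expected_time n sch rk \<le> ennreal (C * real n ^ 2)"
  proof (intro exI[of _ 4608] conjI allI impI)
    fix n :: nat and score :: "bool list \<Rightarrow> bool list set \<Rightarrow> real" and rk
    assume n: "2 \<le> n" and h: "diversity_favouring n score (inner_strings n) \<and> valid_ranking n score rk"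
    show "expected_time n sch rk \<le> ennreal (4608 * real n ^ 2)"
      using expected_time_le_square[OF n _ bound conjunct1[OF h] conjunct2[OF h]] by simp
  qed simp
next
  show "\<exists>C>0. \<forall>n\<ge>2. \<forall>(score :: bool list \<Rightarrow> bool list set \<Rightarrow> real) rk.
      diversity_favouring n score (inner_strings n) \<and> valid_ranking n score rk \<longrightarrow>
      expected_time n Harmonic rk \<le> ennreal (C * real n ^ 2 * ln (real n))"
  proof (intro exI[of _ 108] conjI allI impI)
    fix n :: nat and score :: "bool list \<Rightarrow> bool list set \<Rightarrow> real" and rk
    assume n: "2 \<le> n" and h: "diversity_favouring n score (inner_strings n) \<and> valid_ranking n score rk"
    show "expected_time n Harmonic rk \<le> ennreal (108 * real n ^ 2 * ln (real n))"
      using expected_time_le_square[OF n _ top3_selection_bound_Harmonic_ge[OF n]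
          conjunct1[OF h] conjunct2[OF h]] n by (simp add: mult.assoc)
  qed simp
qed

end
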